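(* For $\tau$ in the upper half-plane, $$\frac{2}{\mathfrak{p}(8\tau)}=\frac{1-v^2(\tau)}{v(\tau)}=\frac{1}{v(\tau)}-v(\tau).$$
   Context: $q=e^{2\pi i\tau}$ and $q^r:=e^{2\pi i r\tau}$ for rational $r$. $v(\tau)=q^{1/2}\prod_{n\ge1}(1-q^n)^{\left(\frac{8}{n}\right)}$ with $\left(\frac{8}{n}\right)$ the Kronecker symbol, and $\mathfrak{p}(\tau)=2q^{1/16}\prod_{n\ge1}\left(\frac{1+q^{n/2}}{1+q^{n/2-1/4}}\right)^2$ (equivalently $\mathfrak{f}_2(\tau/2)^2/\mathfrak{f}(\tau/2)^2$ in terms of the Weber–Schläfli functions). *)

theory Defs
  imports "HOL-Analysis.Analysis"
begin

definition qpow :: "complex \<Rightarrow> real \<Rightarrow> complex" where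
  "qpow \<tau> r = exp (2 * of_real pi * \<i> * of_real r * \<tau>)"

text \<open>Kronecker symbol (8/n) for n >= 1: 0 for even n, 1 if n = +-1 mod 8, -1 if n = +-3 mod 8.\<close>
definition kron8 :: "nat \<Rightarrow> int" where
  "kron8 n = (if n mod 8 = 1 \<or> n mod 8 = 7 then 1
              else if n mod 8 = 3 \<or> n mod 8 = 5 then -1 else 0)"

definition v_fun :: "complex \<Rightarrow> complex" where
  "v_fun \<tau> = qpow \<tau> (1/2) *
     prodinf (\<lambda>k. (1 - qpow \<tau> (real (Suc k))) powi kron8 (Suc k))"

definition p_fun :: "complex \<Rightarrow> complex" where
  "p_fun \<tau> = 2 * qpow \<tau> (1/16) *
     prodinf (\<lambda>k. ((1 + qpow \<tau> (real (Suc k) / 2)) /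
                    (1 + qpow \<tau> (real (Suc k) / 2 - 1/4))) ^ 2)"

end

theory Submission
  imports Defs
begin

text \<open>Write q = exp(2 pi i tau) and (a; q)_inf for the infinite product of the factors 1 - a q^n.
Splitting the product defining v by residues modulo 8 gives
v = q^(1/2) (q; q^8)_inf (q^7; q^8)_inf / ((q^3; q^8)_inf (q^5; q^8)_inf), and directly from its
definition p(8 tau) = 2 q^(1/2) ((-q^4; q^4)_inf / (-q^2; q^4)_inf)^2.  The theorem thus reduces to
the product identity
  (q^3; q^8)^2 (q^5; q^8)^2 - q (q; q^8)^2 (q^7; q^8)^2
    = ((-q^2; q^4) / (-q^4; q^4))^2 (q; q^8) (q^3; q^8) (q^5; q^8) (q^7; q^8).
After multiplication by (q^8; q^8)^2 = (q^4; q^4)^2 (-q^4; q^4)^2, the Jacobi triple product turns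
every product here into a theta series, and the resulting identity between theta series follows by
splitting the double sum over pairs of integers (j, k) according to the parity of j + k.  The triple
product itself is the limit of its finite form, a consequence of the q-binomial theorem, and
Tannery's theorem justifies the passage to the limit.\<close>

section \<open>Gaussian binomial coefficients and the finite triple product\<close>

fun gauss_binomial :: "'a::comm_ring_1 \<Rightarrow> nat \<Rightarrow> nat \<Rightarrow> 'a" where
  "gauss_binomial q 0 k = (if k = 0 then 1 else 0)"
| "gauss_binomial q (Suc n) 0 = 1"
| "gauss_binomial q (Suc n) (Suc k) = q ^ Suc k * gauss_binomial q n (Suc k) + gauss_binomial q n k"

definition q_factorial :: "'a::comm_ring_1 \<Rightarrow> nat \<Rightarrow> 'a" where
  "q_factorial q n = (\<Prod>i<n. 1 - q ^ Suc i)"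

lemma q_factorial_Suc: "q_factorial q (Suc n) = q_factorial q n * (1 - q ^ Suc n)"
  by (simp add: q_factorial_def)

lemma gauss_binomial_eq_0: "n < k \<Longrightarrow> gauss_binomial q n k = 0"
  by (induction q n k rule: gauss_binomial.induct) auto

lemma gauss_binomial_0_right [simp]: "gauss_binomial q n 0 = 1"
  by (cases n) auto

lemma gauss_binomial_self [simp]: "gauss_binomial q n n = 1"
  by (induction n) (auto simp: gauss_binomial_eq_0)

lemma gauss_binomial_q_factorial:
  "k \<le> n \<Longrightarrow> gauss_binomial q n k * q_factorial q k * q_factorial q (n - k) = q_factorial q n"
proof (induction q n k rule: gauss_binomial.induct)
  case (3 q n j)
  show ?case
  proof (cases "j = n")
    case False
    with "3.prems" have "Suc j \<le> n" by simp
    have IH: "gauss_binomial q n (Suc j) * q_factorial q (Suc j) * q_factorial q (n - Suc j) = q_factorial q n"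
             "gauss_binomial q n j * q_factorial q j * q_factorial q (n - j) = q_factorial q n"
      using "3.IH" \<open>Suc j \<le> n\<close> by simp_all
    have split: "q_factorial q (n - j) = q_factorial q (n - Suc j) * (1 - q ^ (n - j))"
      using \<open>Suc j \<le> n\<close> q_factorial_Suc[of q "n - Suc j"] by (simp add: Suc_diff_Suc)
    have powers: "q ^ Suc j * q ^ (n - j) = q ^ Suc n"
      unfolding power_add[symmetric] using \<open>Suc j \<le> n\<close> by simp
    have "gauss_binomial q (Suc n) (Suc j) * q_factorial q (Suc j) * q_factorial q (Suc n - Suc j)
        = q ^ Suc j * (1 - q ^ (n - j))
            * (gauss_binomial q n (Suc j) * q_factorial q (Suc j) * q_factorial q (n - Suc j))
          + (1 - q ^ Suc j) * (gauss_binomial q n j * q_factorial q j * q_factorial q (n - j))"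
      unfolding gauss_binomial.simps diff_Suc_Suc
      by (simp add: split q_factorial_Suc algebra_simps)
    also have "\<dots> = q_factorial q n * (1 - q ^ Suc n)"
      unfolding IH using powers by (simp add: algebra_simps)
    also have "\<dots> = q_factorial q (Suc n)"
      by (simp add: q_factorial_Suc)
    finally show ?thesis .
  qed (simp add: q_factorial_def)
qed (auto simp: q_factorial_def)

lemma q_binomial_theorem:
  fixes x R :: "'a::comm_ring_1"
  shows "(\<Prod>i<n. 1 + x * R ^ (2*i)) = (\<Sum>k\<le>n. gauss_binomial (R^2) n k * R ^ (k*(k-1)) * x ^ k)"
proof (induction n arbitrary: x)
  case (Suc n)
  define c where "c k = gauss_binomial (R^2) n k * R ^ (k * Suc k) * x ^ k" for k
  have "R ^ (k*(k-1)) * (x * R^2) ^ k = R ^ (k * Suc k) * x ^ k" for k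
  proof -
    have "R ^ (k*(k-1)) * (x * R^2) ^ k = R ^ (k*(k-1) + 2*k) * x ^ k"
      by (simp add: power_mult_distrib power_add power_mult)
    moreover have "k*(k-1) + 2*k = k * Suc k" by (cases k) auto
    ultimately show ?thesis by (simp only:)
  qed
  then have IH: "(\<Prod>i<n. 1 + (x * R^2) * R ^ (2*i)) = (\<Sum>k\<le>n. c k)"
    unfolding Suc.IH c_def by (simp add: mult.assoc)
  have step: "gauss_binomial (R^2) (Suc n) (Suc k) * R ^ (Suc k * k) * x ^ Suc k = c (Suc k) + x * c k" for k
  proof -
    have "(R^2) ^ Suc k * R ^ (Suc k * k) = R ^ (Suc k * Suc (Suc k))"
      unfolding power_mult[symmetric] power_add[symmetric] by (rule arg_cong[where f="power R"]) simp
    moreover have "gauss_binomial (R^2) (Suc n) (Suc k) * R ^ (Suc k * k) * x ^ Suc k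
        = gauss_binomial (R^2) n (Suc k) * ((R^2) ^ Suc k * R ^ (Suc k * k)) * x ^ Suc k
          + x * (gauss_binomial (R^2) n k * R ^ (k * Suc k) * x ^ k)"
      by (simp add: algebra_simps)
    ultimately show ?thesis unfolding c_def by simp
  qed
  have top: "(\<Sum>k\<le>Suc n. c k) = (\<Sum>k\<le>n. c k)"
    by (simp add: c_def gauss_binomial_eq_0)
  have "(\<Prod>i<Suc n. 1 + x * R ^ (2*i)) = (1 + x) * (\<Prod>i<n. 1 + (x * R^2) * R ^ (2*i))"
    unfolding prod.lessThan_Suc_shift by (simp add: power_mult mult.assoc power2_eq_square)
  also have "\<dots> = (\<Sum>k\<le>Suc n. c k) + (\<Sum>k\<le>n. x * c k)"
    unfolding IH top distrib_right mult_1 by (simp only: sum_distrib_left)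
  also have "\<dots> = 1 + (\<Sum>k\<le>n. c (Suc k) + x * c k)"
    unfolding sum.atMost_Suc_shift by (simp add: c_def sum.distrib)
  also have "\<dots> = (\<Sum>k\<le>Suc n. gauss_binomial (R^2) (Suc n) k * R ^ (k*(k-1)) * x ^ k)"
    by (simp only: sum.atMost_Suc_shift diff_Suc_1 step) simp
  finally show ?case .
qed simp

lemma prod_one_plus_negative_powers:
  fixes w R :: "'a::field"
  assumes "w \<noteq> 0" "R \<noteq> 0"
  shows "(\<Prod>m<n. 1 + w * R powi (- 2 * int m))
       = w ^ n * R powi (- (int n * (int n - 1))) * (\<Prod>m<n. 1 + inverse w * R ^ (2*m))"
proof (induction n)
  case (Suc n)
  have step: "1 + w * R powi (- 2 * int n) = w * R powi (- 2 * int n) * (1 + inverse w * R ^ (2*n))"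
  proof -
    have "R powi (2 * int n) = R ^ (2 * n)"
      by (metis of_nat_mult of_nat_numeral power_int_of_nat)
    then show ?thesis using assms by (simp add: field_simps power_int_minus)
  qed
  have exponent: "R powi (- (int n * (int n - 1))) * R powi (- 2 * int n)
      = R powi (- (int (Suc n) * (int (Suc n) - 1)))"
    using assms by (simp add: power_int_add[symmetric] algebra_simps)
  show ?case
    unfolding prod.lessThan_Suc Suc.IH step exponent[symmetric] power_Suc by (simp only: mult_ac)
qed simp

lemma prod_shifted_geometric_eq_jacobi_factors:
  fixes z R :: "'a::field"
  assumes z: "z \<noteq> 0" and R: "R \<noteq> 0"
  shows "(\<Prod>i<2*n. 1 + inverse z * R powi (2 - 2 * int n) * R ^ (2*i))
       = z powi (- int n) * R powi (- (int n * (int n - 1)))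
         * (\<Prod>m<n. (1 + z * R ^ (2*m)) * (1 + inverse z * R ^ (2*m+2)))"
proof -
  define x where "x = inverse z * R powi (2 - 2 * int n)"
  have x_term: "x * R ^ (2*i) = inverse z * R powi (2 * int i + 2 - 2 * int n)" for i
  proof -
    have "x * R ^ (2*i) = inverse z * (R powi (2 - 2 * int n) * R powi int (2*i))"
      unfolding x_def power_int_of_nat by (simp only: mult.assoc)
    then show ?thesis
      using R by (simp add: algebra_simps flip: power_int_add)
  qed
  have lower: "(\<Prod>i<n. 1 + x * R ^ (2*i)) = (\<Prod>m<n. 1 + inverse z * R powi (- 2 * int m))"
  proof (subst prod.nat_diff_reindex[symmetric], rule prod.cong)
    fix m assume "m \<in> {..<n}"
    then have "2 * int (n - Suc m) + 2 - 2 * int n = - 2 * int m" by auto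
    then show "1 + x * R ^ (2 * (n - Suc m)) = 1 + inverse z * R powi (- 2 * int m)"
      unfolding x_term by simp
  qed simp
  have upper: "(\<Prod>i<n. 1 + x * R ^ (2 * (n + i))) = (\<Prod>m<n. 1 + inverse z * R ^ (2*m+2))"
  proof (rule prod.cong)
    fix m
    have "2 * int (n + m) + 2 - 2 * int n = int (2*m+2)" by simp
    then show "1 + x * R ^ (2 * (n + m)) = 1 + inverse z * R ^ (2*m+2)"
      unfolding x_term by (metis power_int_of_nat)
  qed simp
  have "inverse z \<noteq> 0" using z by simp
  note reflect = prod_one_plus_negative_powers[OF this R, unfolded inverse_inverse_eq]
  have "(\<Prod>i<2*n. 1 + x * R ^ (2*i)) = (\<Prod>i<n. 1 + x * R ^ (2*i)) * (\<Prod>i<n. 1 + x * R ^ (2 * (n + i)))"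
    using prod.atLeastLessThan_concat[of 0 n "2*n" "\<lambda>i. 1 + x * R ^ (2*i)"]
          prod.shift_bounds_nat_ivl[of "\<lambda>i. 1 + x * R ^ (2*i)" 0 n n]
    by (simp add: atLeast0LessThan mult_2 add.commute)
  also have "\<dots> = z powi (- int n) * R powi (- (int n * (int n - 1)))
                   * (\<Prod>m<n. (1 + z * R ^ (2*m)) * (1 + inverse z * R ^ (2*m+2)))"
    unfolding lower upper reflect
    using z by (simp add: prod.distrib power_int_minus power_inverse mult_ac)
  finally show ?thesis
    unfolding x_def .
qed

lemma finite_jacobi_triple_product:
  fixes z R :: "'a::field"
  assumes z: "z \<noteq> 0" and R: "R \<noteq> 0"
  shows "(\<Prod>m<n. (1 + z * R ^ (2*m)) * (1 + inverse z * R ^ (2*m+2)))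
       = (\<Sum>k\<le>2*n. gauss_binomial (R^2) (2*n) k
                       * (z powi (int n - int k) * R powi ((int n - int k) * (int n - int k - 1))))"
proof -
  define x where "x = inverse z * R powi (2 - 2 * int n)"
  define c where "c = z powi int n * R powi (int n * (int n - 1))"
  have "c * (z powi (- int n) * R powi (- (int n * (int n - 1)))) = 1"
    using z R by (simp add: c_def power_int_minus field_simps flip: power_int_add)
  then have "(\<Prod>m<n. (1 + z * R ^ (2*m)) * (1 + inverse z * R ^ (2*m+2)))
      = c * (\<Sum>k\<le>2*n. gauss_binomial (R^2) (2*n) k * R ^ (k*(k-1)) * x ^ k)"
    unfolding x_def q_binomial_theorem[symmetric] prod_shifted_geometric_eq_jacobi_factors[OF z R]
    by (metis (no_types, lifting) mult.assoc mult_1)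
  also have "\<dots> = (\<Sum>k\<le>2*n. gauss_binomial (R^2) (2*n) k
                       * (z powi (int n - int k) * R powi ((int n - int k) * (int n - int k - 1))))"
    unfolding sum_distrib_left
  proof (rule sum.cong)
    fix k
    have "int (k*(k-1)) = int k * (int k - 1)" by (cases k) (auto simp: algebra_simps)
    then have "R ^ (k*(k-1)) = R powi (int k * (int k - 1))" by (metis power_int_of_nat)
    moreover have "x ^ k = z powi (- int k) * R powi ((2 - 2 * int n) * int k)"
      unfolding x_def power_mult_distrib power_int_mult power_int_of_nat by (simp add: power_int_minus power_inverse)
    moreover have "z powi int n * z powi (- int k) = z powi (int n - int k)"
      using power_int_add[of z "int n" "- int k"] z by simp
    moreover have "R powi (int n * (int n - 1)) * (R powi (int k * (int k - 1)) * R powi ((2 - 2 * int n) * int k))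
        = R powi ((int n - int k) * (int n - int k - 1))"
      using R by (simp add: algebra_simps flip: power_int_add)
    ultimately show "c * (gauss_binomial (R^2) (2*n) k * R ^ (k*(k-1)) * x ^ k)
        = gauss_binomial (R^2) (2*n) k * (z powi (int n - int k) * R powi ((int n - int k) * (int n - int k - 1)))"
      by (simp add: c_def mult_ac)
  qed simp
  finally show ?thesis .
qed

section \<open>The Jacobi triple product\<close>

definition qpochhammer_inf :: "complex \<Rightarrow> complex \<Rightarrow> complex" where
  "qpochhammer_inf a q = (\<Prod>n. 1 - a * q ^ n)"

lemma convergent_prod_one_minus_geometric:
  fixes a q :: "'a::{real_normed_field, banach}"
  assumes "norm q < 1"
  shows "convergent_prod (\<lambda>n. 1 - a * q ^ n)"
proof -
  have "summable (\<lambda>n. norm a * norm q ^ n)"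
    using assms by (intro summable_mult summable_geometric) auto
  then show ?thesis
    by (intro abs_convergent_prod_imp_convergent_prod summable_imp_abs_convergent_prod)
       (simp add: norm_mult norm_power)
qed

lemma has_prod_qpochhammer_inf: "norm q < 1 \<Longrightarrow> (\<lambda>n. 1 - a * q ^ n) has_prod qpochhammer_inf a q"
  unfolding qpochhammer_inf_def by (intro convergent_prod_has_prod convergent_prod_one_minus_geometric)

lemma qpochhammer_inf_LIMSEQ:
  "norm q < 1 \<Longrightarrow> (\<lambda>N. \<Prod>n<N. 1 - a * q ^ n) \<longlonglongrightarrow> qpochhammer_inf a q"
  by (rule has_prod_imp_tendsto'[OF has_prod_qpochhammer_inf])

lemma one_minus_geometric_nonzero:
  fixes a q :: "'a::real_normed_div_algebra"
  assumes "norm q \<le> 1" "norm a < 1"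
  shows "1 - a * q ^ n \<noteq> 0"
proof -
  have "norm (a * q ^ n) \<le> norm a"
    using assms by (simp add: norm_mult norm_power mult_left_le power_le_one)
  with assms(2) show ?thesis by auto
qed

lemma qpochhammer_inf_nonzero:
  assumes "norm q < 1" "norm a < 1"
  shows "qpochhammer_inf a q \<noteq> 0"
  unfolding qpochhammer_inf_def
  using assms by (intro prodinf_nonzero convergent_prod_one_minus_geometric one_minus_geometric_nonzero) auto

lemma q_factorial_LIMSEQ: "norm (q::complex) < 1 \<Longrightarrow> q_factorial q \<longlonglongrightarrow> qpochhammer_inf q q"
  unfolding q_factorial_def[abs_def] power_Suc by (rule qpochhammer_inf_LIMSEQ)

lemma q_factorial_nonzero: "norm (q::complex) < 1 \<Longrightarrow> q_factorial q n \<noteq> 0"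
  unfolding q_factorial_def power_Suc using one_minus_geometric_nonzero[of q q] by simp

lemma gauss_binomial_bounded:
  fixes q :: complex
  assumes "norm q < 1"
  obtains B where "\<And>n k. norm (gauss_binomial q n k) \<le> B"
proof -
  have lim: "q_factorial q \<longlonglongrightarrow> qpochhammer_inf q q"
    using assms by (rule q_factorial_LIMSEQ)
  obtain U where U: "\<And>n. norm (q_factorial q n) \<le> U"
    using convergent_imp_Bseq[OF convergentI[OF lim]] unfolding Bseq_def by auto
  have "(\<lambda>n. inverse (q_factorial q n)) \<longlonglongrightarrow> inverse (qpochhammer_inf q q)"
    using assms by (intro tendsto_inverse lim qpochhammer_inf_nonzero) auto
  then have "Bseq (\<lambda>n. inverse (q_factorial q n))" by (rule convergent_imp_Bseq[OF convergentI])
  then obtain V where V: "\<And>n. norm (inverse (q_factorial q n)) \<le> V"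
    unfolding Bseq_def by auto
  have U0: "0 \<le> U" and V0: "0 \<le> V"
    using order_trans[OF norm_ge_zero U] order_trans[OF norm_ge_zero V] by blast+
  have "norm (gauss_binomial q n k) \<le> U * V * V" for n k
  proof (cases "k \<le> n")
    case True
    then have closed_form: "gauss_binomial q n k
        = q_factorial q n * inverse (q_factorial q k) * inverse (q_factorial q (n - k))"
      using gauss_binomial_q_factorial[OF True, of q] q_factorial_nonzero[OF assms] by (simp add: field_simps)
    show ?thesis
      unfolding closed_form norm_mult by (intro mult_mono U V mult_nonneg_nonneg U0 V0 norm_ge_zero)
  next
    case False
    have "0 \<le> U * V * V" using U0 V0 by simp
    with False show ?thesis by (simp add: gauss_binomial_eq_0)
  qed
  then show ?thesis by (rule that)
qed

lemma tendsto_infsum_int_dominated: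
  fixes f :: "nat \<Rightarrow> int \<Rightarrow> 'a::{real_normed_algebra, banach}" and M :: "int \<Rightarrow> real"
  assumes lim: "\<And>j. (\<lambda>n. f n j) \<longlonglongrightarrow> g j"
    and bound: "\<And>n j. norm (f n j) \<le> M j"
    and summable: "M summable_on UNIV"
  shows "(\<lambda>n. \<Sum>\<^sub>\<infinity>j. f n j) \<longlonglongrightarrow> (\<Sum>\<^sub>\<infinity>j. g j)"
proof -
  have infsum_eq_suminf: "(\<Sum>\<^sub>\<infinity>j. h j) = (\<Sum>k. h (int_decode k))"
    if "summable (\<lambda>k. norm (h (int_decode k)))" for h :: "int \<Rightarrow> 'a"
  proof -
    have "((\<lambda>k. h (int_decode k)) has_sum (\<Sum>k. h (int_decode k))) UNIV"
      using that by (intro norm_summable_imp_has_sum summable_sums[OF summable_norm_cancel])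
    then show ?thesis
      using infsum_reindex_bij_betw[OF bij_int_decode, of h] by (simp add: infsumI)
  qed
  have "(\<lambda>k. M (int_decode k)) summable_on UNIV"
    using summable by (subst summable_on_reindex_bij_betw[OF bij_int_decode])
  then have M_summable: "summable (\<lambda>k. M (int_decode k))"
    by (rule summable_on_imp_summable)
  have tannery: "eventually (\<lambda>n. summable (\<lambda>k. norm (f n (int_decode k)))) sequentially \<and>
      summable (\<lambda>k. norm (g (int_decode k))) \<and>
      (\<lambda>n. \<Sum>k. f n (int_decode k)) \<longlonglongrightarrow> (\<Sum>k. g (int_decode k))"
    by (rule tannerys_theorem[where M = "\<lambda>k. M (int_decode k)"])
       (use lim bound M_summable in \<open>auto intro!: always_eventually\<close>)
  have "summable (\<lambda>k. norm (f n (int_decode k)))" for n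
    by (rule summable_comparison_test[OF _ M_summable]) (use bound in auto)
  then show ?thesis
    using tannery by (simp add: infsum_eq_suminf)
qed

lemma filterlim_nat_add_int_sequentially:
  "filterlim (\<lambda>n. nat (int n + i)) sequentially sequentially"
  unfolding filterlim_at_top eventually_sequentially
proof
  fix m
  show "\<exists>N. \<forall>n\<ge>N. m \<le> nat (int n + i)"
    by (rule exI[of _ "m + nat \<bar>i\<bar>"]) auto
qed

lemma gauss_binomial_central_LIMSEQ:
  fixes Q :: complex
  assumes Q: "norm Q < 1"
  shows "(\<lambda>n. gauss_binomial Q (2*n) (nat (int n - j))) \<longlonglongrightarrow> inverse (qpochhammer_inf Q Q)"
proof -
  define E where "E = qpochhammer_inf Q Q"
  have E: "E \<noteq> 0" and qf_lim: "q_factorial Q \<longlonglongrightarrow> E"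
    using Q by (simp_all add: E_def qpochhammer_inf_nonzero q_factorial_LIMSEQ)
  have closed_form: "\<forall>\<^sub>F n in sequentially.
      q_factorial Q (2*n) / (q_factorial Q (nat (int n - j)) * q_factorial Q (nat (int n + j)))
        = gauss_binomial Q (2*n) (nat (int n - j))"
    unfolding eventually_sequentially
  proof (intro exI[of _ "nat \<bar>j\<bar>"] allI impI)
    fix n assume "nat \<bar>j\<bar> \<le> n"
    then have "nat (int n - j) \<le> 2*n" "2*n - nat (int n - j) = nat (int n + j)"
      by auto
    then show "q_factorial Q (2*n) / (q_factorial Q (nat (int n - j)) * q_factorial Q (nat (int n + j)))
        = gauss_binomial Q (2*n) (nat (int n - j))"
      using gauss_binomial_q_factorial[of "nat (int n - j)" "2*n" Q] q_factorial_nonzero[OF Q]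
      by (simp add: field_simps)
  qed
  have "(\<lambda>n. q_factorial Q (2*n)) \<longlonglongrightarrow> E"
    using LIMSEQ_subseq_LIMSEQ[OF qf_lim, of "\<lambda>n. 2*n"] by (simp add: strict_mono_def o_def)
  moreover have shifted: "(\<lambda>n. q_factorial Q (nat (int n + i))) \<longlonglongrightarrow> E" for i
    by (rule filterlim_compose[OF qf_lim filterlim_nat_add_int_sequentially])
  moreover have "(\<lambda>n. q_factorial Q (nat (int n - j))) \<longlonglongrightarrow> E"
    using shifted[of "-j"] by simp
  ultimately have "(\<lambda>n. q_factorial Q (2*n) / (q_factorial Q (nat (int n - j)) * q_factorial Q (nat (int n + j))))
      \<longlonglongrightarrow> E / (E * E)"
    using E by (intro tendsto_intros) auto
  then have "(\<lambda>n. gauss_binomial Q (2*n) (nat (int n - j))) \<longlonglongrightarrow> E / (E * E)"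
    by (rule Lim_transform_eventually[OF _ closed_form])
  then show ?thesis
    unfolding E_def[symmetric] using E by (simp add: field_simps)
qed

lemma jacobi_partial_product_eq_infsum:
  fixes z R :: complex
  assumes "z \<noteq> 0" "R \<noteq> 0"
  shows "(\<Prod>m<n. (1 + z * R ^ (2*m)) * (1 + inverse z * R ^ (2*m+2)))
       = (\<Sum>\<^sub>\<infinity>j. (if \<bar>j\<bar> \<le> int n then gauss_binomial (R^2) (2*n) (nat (int n - j)) else 0)
                   * (z powi j * R powi (j*(j-1))))"
    (is "_ = (\<Sum>\<^sub>\<infinity>j. ?a j)")
proof -
  have "(\<Prod>m<n. (1 + z * R ^ (2*m)) * (1 + inverse z * R ^ (2*m+2)))
      = (\<Sum>k\<le>2*n. gauss_binomial (R^2) (2*n) k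
                    * (z powi (int n - int k) * R powi ((int n - int k) * (int n - int k - 1))))"
    by (rule finite_jacobi_triple_product[OF assms])
  also have "\<dots> = (\<Sum>j\<in>{-int n..int n}. ?a j)"
  proof (rule sum.reindex_bij_witness[where i = "\<lambda>j. nat (int n - j)" and j = "\<lambda>k. int n - int k"])
    fix k assume "k \<in> {..2*n}"
    then show "nat (int n - (int n - int k)) = k" "int n - int k \<in> {-int n..int n}"
      and "?a (int n - int k) = gauss_binomial (R^2) (2*n) k
             * (z powi (int n - int k) * R powi ((int n - int k) * (int n - int k - 1)))"
      by auto
  qed auto
  also have "\<dots> = (\<Sum>\<^sub>\<infinity>j. ?a j)"
    by (rule infsum_finite[symmetric, THEN trans], simp, rule infsum_cong_neutral) auto
  finally show ?thesis .
qed

lemma jacobi_partial_product_LIMSEQ: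
  fixes z R :: complex
  assumes "norm R < 1"
  shows "(\<lambda>n. \<Prod>m<n. (1 + z * R ^ (2*m)) * (1 + inverse z * R ^ (2*m+2)))
      \<longlonglongrightarrow> qpochhammer_inf (-z) (R^2) * qpochhammer_inf (- (inverse z * R^2)) (R^2)"
proof -
  have "norm (R^2) < 1"
    using assms by (simp add: norm_power power_less_one_iff)
  then have "(\<lambda>N. \<Prod>m<N. 1 + w * (R^2) ^ m) \<longlonglongrightarrow> qpochhammer_inf (-w) (R^2)" for w
    using qpochhammer_inf_LIMSEQ[of "R^2" "-w"] by simp
  moreover have factors: "(1 + z * R ^ (2*m)) * (1 + inverse z * R ^ (2*m+2))
      = (1 + z * (R^2)^m) * (1 + (inverse z * R^2) * (R^2)^m)" for m
    by (simp add: power_mult power_add mult_ac power2_eq_square power_mult_distrib)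
  ultimately show ?thesis
    unfolding factors prod.distrib by (intro tendsto_mult)
qed

text \<open>The summability hypothesis holds for every z; it is only discharged below for the
instances that are needed.\<close>

theorem jacobi_triple_product:
  fixes z R :: complex
  assumes z: "z \<noteq> 0" and R: "R \<noteq> 0" "norm R < 1"
    and summable: "(\<lambda>j. norm (z powi j * R powi (j*(j-1)))) summable_on UNIV"
  shows "qpochhammer_inf (-z) (R^2) * qpochhammer_inf (- (inverse z * R^2)) (R^2) * qpochhammer_inf (R^2) (R^2)
       = (\<Sum>\<^sub>\<infinity>j. z powi j * R powi (j*(j-1)))"
proof -
  define Q where "Q = R^2"
  define E where "E = qpochhammer_inf Q Q"
  define t where "t j = z powi j * R powi (j*(j-1))" for j
  define a where "a n j = (if \<bar>j\<bar> \<le> int n then gauss_binomial Q (2*n) (nat (int n - j)) else 0) * t j" for n j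
  have Q: "norm Q < 1"
    using R by (simp add: Q_def norm_power power_less_one_iff)
  have E: "E \<noteq> 0"
    using Q by (simp add: E_def qpochhammer_inf_nonzero)
  obtain B where B: "\<And>n k. norm (gauss_binomial Q n k) \<le> B"
    using gauss_binomial_bounded[OF Q] by blast
  have bound: "norm (a n j) \<le> B * norm (t j)" for n j
    using B order_trans[OF norm_ge_zero B] by (simp add: a_def norm_mult mult_right_mono)
  have lim: "(\<lambda>n. a n j) \<longlonglongrightarrow> t j / E" for j
  proof -
    have "(\<lambda>n. gauss_binomial Q (2*n) (nat (int n - j)) * t j) \<longlonglongrightarrow> t j / E"
      using tendsto_mult_right[OF gauss_binomial_central_LIMSEQ[OF Q], of j "t j"]
      by (simp add: E_def divide_inverse mult.commute)
    moreover have "\<forall>\<^sub>F n in sequentially. gauss_binomial Q (2*n) (nat (int n - j)) * t j = a n j"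
      unfolding a_def eventually_sequentially by (intro exI[of _ "nat \<bar>j\<bar>"]) auto
    ultimately show ?thesis
      by (rule Lim_transform_eventually)
  qed
  have "(\<lambda>n. \<Prod>m<n. (1 + z * R ^ (2*m)) * (1 + inverse z * R ^ (2*m+2))) \<longlonglongrightarrow> (\<Sum>\<^sub>\<infinity>j. t j / E)"
    unfolding jacobi_partial_product_eq_infsum[OF z R(1)] Q_def[symmetric] t_def[symmetric] a_def[symmetric]
    by (intro tendsto_infsum_int_dominated[OF lim bound])
       (use summable_on_cmult_right[OF summable, of B] in \<open>simp add: t_def\<close>)
  with jacobi_partial_product_LIMSEQ[OF R(2)]
  have "qpochhammer_inf (-z) Q * qpochhammer_inf (- (inverse z * Q)) Q = (\<Sum>\<^sub>\<infinity>j. t j / E)"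
    unfolding Q_def by (rule LIMSEQ_unique)
  also have "\<dots> = (\<Sum>\<^sub>\<infinity>j. t j) / E"
    by (simp add: divide_inverse infsum_cmult_left')
  finally show ?thesis
    using E by (simp add: Q_def E_def t_def field_simps)
qed

section \<open>Theta series\<close>

definition theta_series :: "complex \<Rightarrow> complex \<Rightarrow> int \<Rightarrow> int \<Rightarrow> complex" where
  "theta_series \<epsilon> q \<alpha> \<beta> = (\<Sum>\<^sub>\<infinity>j. \<epsilon> powi j * q powi (\<alpha> * j * j + \<beta> * j))"

lemma summable_on_power_abs_int:
  fixes r :: real
  assumes "0 \<le> r" "r < 1"
  shows "(\<lambda>j::int. r ^ nat \<bar>j\<bar>) summable_on UNIV"
proof -
  have geometric: "(\<lambda>n. r ^ n) summable_on UNIV"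
    using assms by (subst summable_on_UNIV_nonneg_real_iff) (auto intro: summable_geometric)
  have nonneg: "(\<lambda>j::int. r ^ nat \<bar>j\<bar>) summable_on range int"
    using geometric by (subst summable_on_reindex) (auto simp: o_def)
  have neg: "(\<lambda>j::int. r ^ nat \<bar>j\<bar>) summable_on range (\<lambda>n. - int n - 1)"
    using summable_on_cmult_right[OF geometric, of r]
    by (subst summable_on_reindex) (auto simp: inj_on_def o_def nat_add_distrib)
  have "range int \<inter> range (\<lambda>n. - int n - 1) = {}"
    by fastforce
  note summable_on_Un_disjoint[OF nonneg neg this]
  moreover have "range int \<union> range (\<lambda>n. - int n - 1) = UNIV"
  proof -
    have "j \<in> range int \<union> range (\<lambda>n. - int n - 1)" for j :: int
    proof (cases "0 \<le> j")
      case True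
      then show ?thesis using rangeI[of int "nat j"] by simp
    next
      case False
      then show ?thesis using rangeI[of "\<lambda>n. - int n - 1" "nat (- j - 1)"] by simp
    qed
    then show ?thesis by auto
  qed
  ultimately show ?thesis
    by simp
qed

lemma quadratic_ge_abs:
  fixes \<alpha> \<beta> j :: int
  assumes "1 \<le> \<alpha>"
  shows "\<bar>j\<bar> - (\<bar>\<beta>\<bar> + 1)^2 \<le> \<alpha> * j * j + \<beta> * j"
proof -
  have "j * j \<le> \<alpha> * j * j"
    using mult_right_mono[OF assms, of "j*j"] by (simp add: mult.assoc)
  moreover have "- (\<bar>\<beta>\<bar> * \<bar>j\<bar>) \<le> \<beta> * j"
    using abs_ge_minus_self[of "\<beta> * j"] by (simp add: abs_mult)
  moreover have "x * b \<le> x * x + b^2" if "0 \<le> x" "0 \<le> b" for x b :: int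
    using that by (metis add_increasing add_increasing2 mult_left_mono mult_right_mono
                    nle_le power2_eq_square zero_le_square)
  from this[of "\<bar>j\<bar>" "\<bar>\<beta>\<bar> + 1"] have "\<bar>j\<bar> * (\<bar>\<beta>\<bar> + 1) \<le> \<bar>j\<bar> * \<bar>j\<bar> + (\<bar>\<beta>\<bar> + 1)^2"
    by simp
  ultimately show ?thesis by (simp add: algebra_simps abs_mult_self_eq)
qed

lemma theta_series_abs_summable:
  fixes q \<epsilon> :: complex and \<alpha> \<beta> :: int
  assumes q: "q \<noteq> 0" "norm q < 1" and "norm \<epsilon> = 1" "1 \<le> \<alpha>"
  shows "(\<lambda>j. norm (\<epsilon> powi j * q powi (\<alpha> * j * j + \<beta> * j))) summable_on UNIV"
proof -
  define K where "K = (\<bar>\<beta>\<bar> + 1)^2"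
  have r: "0 < norm q" "norm q < 1" using q by auto
  have "(\<lambda>j::int. norm q powi (- K) * norm q ^ nat \<bar>j\<bar>) summable_on UNIV"
    using summable_on_power_abs_int[of "norm q"] r by (intro summable_on_cmult_right) auto
  then show ?thesis
  proof (rule summable_on_comparison_test)
    fix j :: int
    have "norm (\<epsilon> powi j * q powi (\<alpha> * j * j + \<beta> * j)) = norm q powi (\<alpha> * j * j + \<beta> * j)"
      using assms by (simp add: norm_mult norm_power_int)
    also have "\<dots> \<le> norm q powi (\<bar>j\<bar> - K)"
      using quadratic_ge_abs[OF \<open>1 \<le> \<alpha>\<close>, of j \<beta>] r unfolding K_def by (intro power_int_decreasing) auto
    also have "\<dots> = norm q powi (- K + int (nat \<bar>j\<bar>))"
      by simp
    also have "\<dots> = norm q powi (- K) * norm q ^ nat \<bar>j\<bar>"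
      using power_int_add[of "norm q" "- K" "int (nat \<bar>j\<bar>)"] power_int_of_nat[of "norm q" "nat \<bar>j\<bar>"] r
      by simp
    finally show "norm (\<epsilon> powi j * q powi (\<alpha> * j * j + \<beta> * j)) \<le> norm q powi (- K) * norm q ^ nat \<bar>j\<bar>" .
  qed auto
qed

lemma has_sum_product:
  fixes f :: "'a \<Rightarrow> 'c::{banach, real_normed_field, second_countable_topology}" and g :: "'b \<Rightarrow> 'c"
  assumes "countable A" "countable B"
    and "(\<lambda>x. norm (f x)) summable_on A" "(\<lambda>y. norm (g y)) summable_on B"
  shows "((\<lambda>(x, y). f x * g y) has_sum (infsum f A * infsum g B)) (A \<times> B)"
proof -
  have f: "Infinite_Set_Sum.abs_summable_on f A" and g: "Infinite_Set_Sum.abs_summable_on g B"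
    using assms abs_summable_equivalent by blast+
  then have "Infinite_Set_Sum.abs_summable_on (\<lambda>(x, y). f x * g y) (A \<times> B)"
    and "infsetsum (\<lambda>(x, y). f x * g y) (A \<times> B) = infsetsum f A * infsetsum g B"
    using assms by (simp_all add: abs_summable_on_product infsetsum_product)
  then show ?thesis
    using f g
    by (metis abs_summable_equivalent abs_summable_summable has_sum_infsum infsetsum_infsum)
qed

lemma has_sum_int_pairs_by_parity:
  fixes F :: "int \<times> int \<Rightarrow> 'a::topological_comm_monoid_add"
  assumes "((\<lambda>(m, n). F (m - n, m + n)) has_sum a) UNIV"
    and "((\<lambda>(m, n). F (m - n, 1 - m - n)) has_sum b) UNIV"
  shows "(F has_sum (a + b)) UNIV"
proof -
  define \<phi> where "\<phi> = (\<lambda>(m::int, n::int). (m - n, m + n))"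
  define \<psi> where "\<psi> = (\<lambda>(m::int, n::int). (m - n, 1 - m - n))"
  have "inj \<phi>" "inj \<psi>"
    by (auto simp: inj_on_def \<phi>_def \<psi>_def)
  then have "(F has_sum a) (range \<phi>)" "(F has_sum b) (range \<psi>)"
    using assms by (simp_all add: has_sum_reindex \<phi>_def \<psi>_def case_prod_unfold o_def)
  moreover have "range \<phi> \<inter> range \<psi> = {}"
    by (auto simp: \<phi>_def \<psi>_def) presburger
  moreover have "(j, k) \<in> range \<phi> \<union> range \<psi>" for j k :: int
  proof (cases "even (j + k)")
    case True
    then obtain s where "j + k = 2 * s" by blast
    then have "\<phi> (s, s - j) = (j, k)" by (simp add: \<phi>_def)
    then show ?thesis by (metis UnI1 rangeI)
  next
    case False
    then obtain s where "j + k = 2 * s + 1" by (rule oddE)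
    then have "\<psi> (j - s, - s) = (j, k)" by (simp add: \<psi>_def)
    then show ?thesis by (metis UnI2 rangeI)
  qed
  then have "range \<phi> \<union> range \<psi> = UNIV"
    by auto
  ultimately show ?thesis
    using has_sum_Un_disjoint by metis
qed

lemma theta_series_identity:
  fixes q :: complex
  assumes q: "q \<noteq> 0" "norm q < 1"
  shows "(theta_series (-1) q 4 (-1))^2 - q * (theta_series (-1) q 4 (-3))^2
       = theta_series 1 q 2 0 * theta_series (-1) q 2 (-1)"
proof -
  define T where "T \<epsilon> \<alpha> \<beta> j = \<epsilon> powi j * q powi (\<alpha> * j * j + \<beta> * j)" for \<epsilon> :: complex and \<alpha> \<beta> j :: int
  have product: "((\<lambda>(m, n). T \<epsilon> \<alpha> \<beta> m * T \<epsilon>' \<alpha>' \<beta>' n) has_sum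
        (theta_series \<epsilon> q \<alpha> \<beta> * theta_series \<epsilon>' q \<alpha>' \<beta>')) UNIV"
    if "norm \<epsilon> = 1" "1 \<le> \<alpha>" "norm \<epsilon>' = 1" "1 \<le> \<alpha>'" for \<epsilon> \<alpha> \<beta> \<epsilon>' \<alpha>' \<beta>'
    using has_sum_product[OF _ _ theta_series_abs_summable[OF q that(1,2)] theta_series_abs_summable[OF q that(3,4)]]
    by (simp add: theta_series_def T_def)
  have square: "((\<lambda>(m, n). T (-1) 4 \<beta> m * T (-1) 4 \<beta> n) has_sum (theta_series (-1) q 4 \<beta>)^2) UNIV" for \<beta>
    unfolding power2_eq_square by (rule product) simp_all
  have T_mult: "T \<epsilon> \<alpha> \<beta> j * T \<epsilon>' \<alpha>' \<beta>' k
      = \<epsilon> powi j * \<epsilon>' powi k * q powi (\<alpha> * j * j + \<beta> * j + (\<alpha>' * k * k + \<beta>' * k))"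
    for \<epsilon> \<epsilon>' \<alpha> \<beta> \<alpha>' \<beta>' j k
    using q by (simp add: T_def power_int_add mult_ac)
  have sign_add: "(-1::complex) powi (m + n) = (-1) powi m * (-1) powi n" for m n
    by (simp add: power_int_add)
  have sign_one_minus: "(-1::complex) powi (1 - k) = - ((-1) powi k)" for k
    using power_int_add[of "-1::complex" 1 "- k"] by (simp add: power_int_minus_one_minus)
  define F where "F = (\<lambda>(j, k). T 1 2 0 j * T (-1) 2 (-1) k)"
  have "F (m - n, m + n) = T (-1) 4 (-1) m * T (-1) 4 (-1) n" for m n
    unfolding F_def prod.case T_mult
    by (rule arg_cong2[where f = "\<lambda>s e. s * q powi e"]) (simp_all add: sign_add algebra_simps)
  moreover have "F (m - n, 1 - m - n) = - q * (T (-1) 4 (-3) m * T (-1) 4 (-3) n)" for m n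
  proof -
    have "F (m - n, 1 - m - n) = - ((-1) powi m * (-1) powi n) * q powi (1 + (4 * m * m + (-3) * m + (4 * n * n + (-3) * n)))"
      unfolding F_def prod.case T_mult
      by (rule arg_cong2[where f = "\<lambda>s e. s * q powi e"]) (simp_all add: sign_one_minus sign_add algebra_simps)
    then show ?thesis
      unfolding T_mult using q by (simp add: power_int_add)
  qed
  ultimately have "(F has_sum (theta_series (-1) q 4 (-1))^2 + - q * (theta_series (-1) q 4 (-3))^2) UNIV"
    using has_sum_cmult_right[OF square[of "-3"], of "-q"] square[of "-1"]
    by (intro has_sum_int_pairs_by_parity) (simp_all add: case_prod_unfold)
  moreover have "(F has_sum (theta_series 1 q 2 0 * theta_series (-1) q 2 (-1))) UNIV"
    unfolding F_def by (rule product) simp_all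
  ultimately show ?thesis
    using has_sum_unique by fastforce
qed

lemma jacobi_triple_product_theta:
  fixes q \<epsilon> :: complex and r s :: nat
  assumes q: "q \<noteq> 0" "norm q < 1" and \<epsilon>: "\<epsilon> = 1 \<or> \<epsilon> = -1" and r: "1 \<le> r" "s \<le> 2*r"
  shows "qpochhammer_inf (- (\<epsilon> * q^s)) (q^(2*r)) * qpochhammer_inf (- (\<epsilon> * q^(2*r - s))) (q^(2*r))
           * qpochhammer_inf (q^(2*r)) (q^(2*r))
       = theta_series \<epsilon> q r (int s - int r)"
proof -
  have powers: "(\<epsilon> * q^s) powi j * (q^r) powi (j*(j-1)) = \<epsilon> powi j * q powi (int r * j * j + (int s - int r) * j)" for j
  proof -
    have "(\<epsilon> * q^s) powi j * (q^r) powi (j*(j-1)) = \<epsilon> powi j * (q powi (int s * j) * q powi (int r * (j*(j-1))))"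
      by (simp add: power_int_mult_distrib power_int_power mult_ac)
    also have "\<dots> = \<epsilon> powi j * q powi (int r * j * j + (int s - int r) * j)"
      using q by (simp add: power_int_add[symmetric] algebra_simps)
    finally show ?thesis .
  qed
  have "(\<lambda>j. norm (\<epsilon> powi j * q powi (int r * j * j + (int s - int r) * j))) summable_on UNIV"
    using \<epsilon> r by (intro theta_series_abs_summable q) auto
  then have "qpochhammer_inf (- (\<epsilon> * q^s)) ((q^r)^2) * qpochhammer_inf (- (inverse (\<epsilon> * q^s) * (q^r)^2)) ((q^r)^2)
           * qpochhammer_inf ((q^r)^2) ((q^r)^2) = theta_series \<epsilon> q r (int s - int r)"
    unfolding theta_series_def powers[symmetric] using q \<epsilon> r
    by (intro jacobi_triple_product) (auto simp: norm_power power_less_one_iff)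
  moreover have "inverse (\<epsilon> * q^s) * (q^r)^2 = \<epsilon> * q^(2*r - s)"
    using q \<epsilon> r by (auto simp: power_diff power_mult field_simps)
  ultimately show ?thesis
    by (simp add: power_mult mult.commute)
qed

section \<open>Dissections of q-Pochhammer products\<close>

lemma has_prod_residue_classes:
  fixes f :: "nat \<Rightarrow> 'a::real_normed_field"
  assumes "0 < m" "convergent_prod f" "\<And>r. r < m \<Longrightarrow> (\<lambda>n. f (m * n + r)) has_prod P r"
  shows "f has_prod (\<Prod>r<m. P r)"
proof -
  have "(\<lambda>N. \<Prod>i<N * m. f i) \<longlonglongrightarrow> prodinf f"
    using LIMSEQ_subseq_LIMSEQ[OF has_prod_imp_tendsto'[OF convergent_prod_has_prod[OF assms(2)]], of "\<lambda>N. N * m"]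
      assms(1) by (simp add: strict_mono_def o_def)
  moreover have "(\<Prod>i<N * m. f i) = (\<Prod>r<m. \<Prod>n<N. f (m * n + r))" for N
  proof -
    have "(\<Prod>i<N * m. f i) = (\<Prod>n<N. \<Prod>r<m. f (m * n + r))"
      unfolding prod.nat_group[symmetric]
    proof (rule prod.cong[OF refl])
      fix n
      have "(\<Prod>i\<in>{0 + n * m..<m + n * m}. f i) = (\<Prod>r\<in>{0..<m}. f (r + n * m))"
        by (rule prod.shift_bounds_nat_ivl)
      then show "prod f {n * m..<n * m + m} = (\<Prod>r<m. f (m * n + r))"
        by (simp add: atLeast0LessThan add.commute mult.commute)
    qed
    then show ?thesis by (simp only: prod.swap[of _ "{..<m}"])
  qed
  moreover have "(\<lambda>N. \<Prod>r<m. \<Prod>n<N. f (m * n + r)) \<longlonglongrightarrow> (\<Prod>r<m. P r)"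
    using assms(3) by (intro tendsto_prod has_prod_imp_tendsto') auto
  ultimately have "prodinf f = (\<Prod>r<m. P r)"
    using LIMSEQ_unique by auto
  with assms(2) show ?thesis
    by (simp add: convergent_prod_has_prod_iff)
qed

lemma qpochhammer_inf_even_odd:
  assumes "norm q < 1"
  shows "qpochhammer_inf a q = qpochhammer_inf a (q^2) * qpochhammer_inf (a * q) (q^2)"
proof -
  have q2: "norm (q^2) < 1"
    using assms by (simp add: norm_power power_less_one_iff)
  have "(\<lambda>n. 1 - a * q ^ n) has_prod (\<Prod>r<2. qpochhammer_inf (a * q ^ r) (q^2))"
  proof (rule has_prod_residue_classes)
    fix r
    have "(\<lambda>n. 1 - a * q ^ (2 * n + r)) = (\<lambda>n. 1 - (a * q ^ r) * (q^2) ^ n)"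
      unfolding power_add power_mult by (simp add: mult_ac)
    then show "(\<lambda>n. 1 - a * q ^ (2 * n + r)) has_prod qpochhammer_inf (a * q ^ r) (q^2)"
      using has_prod_qpochhammer_inf[OF q2] by simp
  qed (use convergent_prod_one_minus_geometric[OF assms] in auto)
  then have "qpochhammer_inf a q = (\<Prod>r<2. qpochhammer_inf (a * q ^ r) (q^2))"
    using has_prod_qpochhammer_inf[OF assms] has_prod_unique2 by blast
  then show ?thesis
    by (simp add: eval_nat_numeral)
qed

lemma qpochhammer_inf_mult_minus:
  assumes "norm q < 1"
  shows "qpochhammer_inf a q * qpochhammer_inf (- a) q = qpochhammer_inf (a^2) (q^2)"
proof -
  have "qpochhammer_inf a q * qpochhammer_inf (- a) q = (\<Prod>n. (1 - a * q ^ n) * (1 + a * q ^ n))"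
    unfolding qpochhammer_inf_def
    using prodinf_mult[OF convergent_prod_one_minus_geometric[OF assms, of a]
                          convergent_prod_one_minus_geometric[OF assms, of "- a"]]
    by simp
  also have "\<dots> = qpochhammer_inf (a^2) (q^2)"
    unfolding qpochhammer_inf_def
    by (simp add: algebra_simps power2_eq_square power_mult_distrib flip: power_mult)
  finally show ?thesis .
qed

lemma qpochhammer_mod8_identity:
  fixes q :: complex
  assumes q: "q \<noteq> 0" "norm q < 1"
  defines "A r \<equiv> qpochhammer_inf (q^r) (q^8)"
  shows "(A 3 * A 5)^2 - q * (A 1 * A 7)^2
       = (qpochhammer_inf (- (q^2)) (q^4) / qpochhammer_inf (- (q^4)) (q^4))^2 * (A 1 * A 3 * A 5 * A 7)"
proof -
  define B where "B = qpochhammer_inf (- (q^2)) (q^4)"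
  define D where "D = qpochhammer_inf (- (q^4)) (q^4)"
  define E4 where "E4 = qpochhammer_inf (q^4) (q^4)"
  define E8 where "E8 = qpochhammer_inf (q^8) (q^8)"
  have q4: "norm (q^4) < 1"
    using q by (simp add: norm_power power_less_one_iff)
  have "A 3 * A 5 * E8 = theta_series (-1) q 4 (-1)"
    using jacobi_triple_product_theta[OF q, of "-1" 4 3] by (simp add: A_def E8_def)
  moreover have "A 1 * A 7 * E8 = theta_series (-1) q 4 (-3)"
    using jacobi_triple_product_theta[OF q, of "-1" 4 1] by (simp add: A_def E8_def)
  moreover have "B * B * E4 = theta_series 1 q 2 0"
    using jacobi_triple_product_theta[OF q, of 1 2 2] by (simp add: B_def E4_def)
  moreover have "qpochhammer_inf q (q^4) * qpochhammer_inf (q^3) (q^4) * E4 = theta_series (-1) q 2 (-1)"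
    using jacobi_triple_product_theta[OF q, of "-1" 2 1] by (simp add: E4_def)
  ultimately have "(A 3 * A 5 * E8)^2 - q * (A 1 * A 7 * E8)^2
      = B * B * E4 * (qpochhammer_inf q (q^4) * qpochhammer_inf (q^3) (q^4) * E4)"
    using theta_series_identity[OF q] by simp
  moreover have "qpochhammer_inf q (q^4) = A 1 * A 5" "qpochhammer_inf (q^3) (q^4) = A 3 * A 7"
    using qpochhammer_inf_even_odd[OF q4, of q] qpochhammer_inf_even_odd[OF q4, of "q^3"]
    by (simp_all add: A_def flip: power_mult power_add power_Suc)
  moreover have "E8 = E4 * D"
    using qpochhammer_inf_mult_minus[OF q4, of "q^4"] by (simp add: E4_def E8_def D_def flip: power_mult)
  moreover have "D \<noteq> 0" "E4 \<noteq> 0"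
    using q4 by (simp_all add: D_def E4_def qpochhammer_inf_nonzero)
  ultimately have "E4^2 * (D^2 * ((A 3 * A 5)^2 - q * (A 1 * A 7)^2)) = E4^2 * (B^2 * (A 1 * A 3 * A 5 * A 7))"
    by (simp add: algebra_simps power2_eq_square)
  then have "D^2 * ((A 3 * A 5)^2 - q * (A 1 * A 7)^2) = B^2 * (A 1 * A 3 * A 5 * A 7)"
    using \<open>E4 \<noteq> 0\<close> by simp
  then show ?thesis
    unfolding B_def[symmetric] D_def[symmetric] using \<open>D \<noteq> 0\<close> by (simp add: field_simps)
qed

definition rgg_product :: "complex \<Rightarrow> complex" where
  "rgg_product q = qpochhammer_inf q (q^8) * qpochhammer_inf (q^7) (q^8)
                   / (qpochhammer_inf (q^3) (q^8) * qpochhammer_inf (q^5) (q^8))"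

lemma rgg_product_nonzero: "norm q < 1 \<Longrightarrow> rgg_product q \<noteq> 0"
  by (simp add: rgg_product_def qpochhammer_inf_nonzero norm_power power_less_one_iff)

lemma rgg_product_identity:
  fixes q :: complex
  assumes q: "q \<noteq> 0" "norm q < 1"
  shows "1 - q * (rgg_product q)^2
       = (qpochhammer_inf (- (q^2)) (q^4) / qpochhammer_inf (- (q^4)) (q^4))^2 * rgg_product q"
proof -
  define A where "A r = qpochhammer_inf (q^r) (q^8)" for r
  define Y where "Y = qpochhammer_inf (- (q^2)) (q^4) / qpochhammer_inf (- (q^4)) (q^4)"
  have X: "rgg_product q = A 1 * A 7 / (A 3 * A 5)"
    by (simp add: rgg_product_def A_def)
  have "A 3 * A 5 \<noteq> 0"
    using q by (simp add: A_def qpochhammer_inf_nonzero norm_power power_less_one_iff)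
  then have "1 - q * (rgg_product q)^2 = ((A 3 * A 5)^2 - q * (A 1 * A 7)^2) / (A 3 * A 5)^2"
    unfolding X by (simp add: field_simps power2_eq_square)
  also have "\<dots> = Y^2 * (A 1 * A 3 * A 5 * A 7) / (A 3 * A 5)^2"
    unfolding A_def Y_def qpochhammer_mod8_identity[OF q] ..
  also have "\<dots> = Y^2 * rgg_product q"
    using \<open>A 3 * A 5 \<noteq> 0\<close> unfolding X by (simp add: power2_eq_square mult_ac)
  finally show ?thesis
    unfolding Y_def .
qed

lemma convergent_prod_one_minus_power_int_sign:
  fixes q :: "'a::{real_normed_field, banach}"
  assumes q: "norm q < 1" and e: "\<And>k. e k \<in> {-1, 0, 1}"
  shows "convergent_prod (\<lambda>k. (1 - q ^ Suc k) powi e k)"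
proof -
  have factor_if: "convergent_prod (\<lambda>k. if P k then 1 - q ^ Suc k else 1)" for P
  proof (intro abs_convergent_prod_imp_convergent_prod summable_imp_abs_convergent_prod)
    have "summable (\<lambda>k. norm q * norm q ^ k)"
      using q by (intro summable_mult summable_geometric) simp
    then show "summable (\<lambda>k. norm ((if P k then 1 - q ^ Suc k else 1) - 1))"
      by (rule summable_comparison_test') (simp add: norm_mult norm_power)
  qed
  have "(\<lambda>k. (1 - q ^ Suc k) powi e k)
      = (\<lambda>k. (if e k = 1 then 1 - q ^ Suc k else 1) / (if e k = -1 then 1 - q ^ Suc k else 1))"
  proof
    fix k
    show "(1 - q ^ Suc k) powi e k = (if e k = 1 then 1 - q ^ Suc k else 1) / (if e k = -1 then 1 - q ^ Suc k else 1)"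
      using e[of k] by (auto simp: power_int_minus divide_inverse)
  qed
  then show ?thesis
    by (simp only: convergent_prod_divide factor_if)
qed

lemma prodinf_kron8_eq_rgg_product:
  fixes q :: complex
  assumes q: "norm q < 1"
  shows "(\<Prod>k. (1 - q ^ Suc k) powi kron8 (Suc k)) = rgg_product q"
proof -
  define f where "f k = (1 - q ^ Suc k) powi kron8 (Suc k)" for k
  have kron8_values: "kron8 n \<in> {-1, 0, 1}" for n
    by (simp add: kron8_def)
  have "convergent_prod f"
    unfolding f_def[abs_def] using q kron8_values by (rule convergent_prod_one_minus_power_int_sign)
  moreover have "(\<lambda>n. f (8 * n + r)) has_prod (qpochhammer_inf (q ^ Suc r) (q^8) powi kron8 (Suc r))" for r
  proof -
    have "kron8 (Suc (8 * n + r)) = kron8 (Suc r)" for n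
      by (simp add: kron8_def)
    then have "f (8 * n + r) = (1 - q ^ Suc r * (q^8) ^ n) powi kron8 (Suc r)" for n
      unfolding f_def by (metis add_Suc_right power_add power_mult mult.commute)
    moreover have "(\<lambda>n. 1 - q ^ Suc r * (q^8) ^ n) has_prod qpochhammer_inf (q ^ Suc r) (q^8)"
      using q by (intro has_prod_qpochhammer_inf) (simp add: norm_power power_less_one_iff)
    ultimately show ?thesis
      using kron8_values[of "Suc r"] by (auto simp: power_int_minus dest: has_prod_inverse)
  qed
  ultimately have "f has_prod (\<Prod>r<8. qpochhammer_inf (q ^ Suc r) (q^8) powi kron8 (Suc r))"
    by (intro has_prod_residue_classes) auto
  moreover have "kron8 1 = 1" "kron8 2 = 0" "kron8 3 = -1" "kron8 4 = 0"
    "kron8 5 = -1" "kron8 6 = 0" "kron8 7 = 1" "kron8 8 = 0"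
    by (simp_all add: kron8_def)
  ultimately show ?thesis
    unfolding f_def by (simp add: rgg_product_def has_prod_iff eval_nat_numeral power_int_minus field_simps)
qed

section \<open>The functions v and p\<close>

lemma qpow_eq_exp: "qpow \<tau> r = exp (of_real r * (2 * of_real pi * \<i> * \<tau>))"
  unfolding qpow_def by (simp add: mult_ac)

lemma qpow_of_nat: "qpow \<tau> (real n) = qpow \<tau> 1 ^ n"
  unfolding qpow_eq_exp by (simp add: exp_of_nat_mult[symmetric])

lemma qpow_8_mult: "qpow (8 * \<tau>) r = qpow \<tau> (8 * r)"
  unfolding qpow_eq_exp by (simp add: mult_ac)

lemma qpow_half_squared: "qpow \<tau> (1/2) ^ 2 = qpow \<tau> 1"
  unfolding qpow_eq_exp by (simp add: mult_ac flip: exp_of_nat_mult)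

lemma norm_qpow: "norm (qpow \<tau> r) = exp (- 2 * pi * r * Im \<tau>)"
  unfolding qpow_eq_exp norm_exp_eq_Re by simp

lemma v_fun_eq_rgg_product:
  fixes \<tau> :: complex
  defines "q \<equiv> qpow \<tau> 1"
  assumes "Im \<tau> > 0"
  shows "v_fun \<tau> = qpow \<tau> (1/2) * rgg_product q"
proof -
  have q: "norm q < 1"
    using assms by (simp add: q_def norm_qpow)
  show ?thesis
    unfolding v_fun_def qpow_of_nat q_def[symmetric] prodinf_kron8_eq_rgg_product[OF q] ..
qed

lemma p_fun_8_eq_qpochhammer:
  fixes \<tau> :: complex
  defines "q \<equiv> qpow \<tau> 1"
  assumes "Im \<tau> > 0"
  shows "p_fun (8 * \<tau>) = 2 * qpow \<tau> (1/2) / (qpochhammer_inf (- (q^2)) (q^4) / qpochhammer_inf (- (q^4)) (q^4))^2"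
proof -
  have q4: "norm (q^4) < 1"
    using assms by (simp add: q_def norm_qpow norm_power power_less_one_iff)
  have "qpow (8 * \<tau>) (real (Suc k) / 2) = qpow \<tau> (real (4 + 4 * k))"
    and "qpow (8 * \<tau>) (real (Suc k) / 2 - 1/4) = qpow \<tau> (real (2 + 4 * k))"
    and "qpow (8 * \<tau>) (1/16) = qpow \<tau> (1/2)" for k
    unfolding qpow_8_mult by (auto intro!: arg_cong[where f = "qpow \<tau>"] simp: field_simps)
  then have "qpow (8 * \<tau>) (real (Suc k) / 2) = q^4 * (q^4)^k"
    and "qpow (8 * \<tau>) (real (Suc k) / 2 - 1/4) = q^2 * (q^4)^k"
    and "qpow (8 * \<tau>) (1/16) = qpow \<tau> (1/2)" for k
    unfolding qpow_of_nat q_def by (simp_all only: power_add power_mult)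
  moreover have "(\<Prod>k. ((1 + q^4 * (q^4)^k) / (1 + q^2 * (q^4)^k))^2)
      = (qpochhammer_inf (- (q^4)) (q^4) / qpochhammer_inf (- (q^2)) (q^4))^2"
    using has_prod_divide[OF has_prod_qpochhammer_inf[OF q4, of "- (q^4)"] has_prod_qpochhammer_inf[OF q4, of "- (q^2)"]]
    by (simp add: has_prod_iff prodinf_power convergent_prod_power)
  ultimately show ?thesis
    unfolding p_fun_def by (simp add: power_divide)
qed

theorem proposition5:
  fixes \<tau> :: complex
  assumes "Im \<tau> > 0"
  shows "2 / p_fun (8 * \<tau>) = (1 - (v_fun \<tau>)\<^sup>2) / v_fun \<tau>
       \<and> (1 - (v_fun \<tau>)\<^sup>2) / v_fun \<tau> = 1 / v_fun \<tau> - v_fun \<tau>"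
proof -
  define q where "q = qpow \<tau> 1"
  define t where "t = qpow \<tau> (1/2)"
  define Y where "Y = qpochhammer_inf (- (q^2)) (q^4) / qpochhammer_inf (- (q^4)) (q^4)"
  have q: "q \<noteq> 0" "norm q < 1"
    using assms by (simp_all add: q_def qpow_def norm_qpow)
  have t: "t \<noteq> 0" "t^2 = q"
    unfolding t_def q_def qpow_half_squared by (simp_all add: qpow_def)
  have "(1 - (v_fun \<tau>)\<^sup>2) / v_fun \<tau> = (1 - q * (rgg_product q)^2) / (t * rgg_product q)"
    unfolding v_fun_eq_rgg_product[OF assms] q_def[symmetric] t_def[symmetric] t(2)[symmetric]
    by (simp add: power_mult_distrib)
  also have "\<dots> = Y^2 / t"
    unfolding rgg_product_identity[OF q] Y_def[symmetric] using rgg_product_nonzero[OF q(2)] by simp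
  also have "\<dots> = 2 / p_fun (8 * \<tau>)"
    unfolding p_fun_8_eq_qpochhammer[OF assms] q_def[symmetric] t_def[symmetric] Y_def[symmetric] by simp
  finally have "(1 - (v_fun \<tau>)\<^sup>2) / v_fun \<tau> = 2 / p_fun (8 * \<tau>)" .
  moreover have "(1 - (v_fun \<tau>)\<^sup>2) / v_fun \<tau> = 1 / v_fun \<tau> - v_fun \<tau>"
    by (cases "v_fun \<tau> = 0") (simp_all add: field_simps power2_eq_square)
  ultimately show ?thesis
    by simp
qed

end
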